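(* Let $k\ge 2$. A maximally-connected coupling $r=(r_{ij})$ of the 1-2 system of $(R^1,R^2)$, if it exists, is unique. Moreover, in this coupling the only entries $r_{ij}$ that can be nonzero are the diagonal entries $r_{11},\dots,r_{kk}$ together with either the entries $r_{i1},r_{i2},\dots,r_{ik}$ of a single fixed row $i$, or the entries $r_{1j},r_{2j},\dots,r_{kj}$ of a single fixed column $j$.
   Context: Let $R^1,R^2$ be two stochastically unrelated random variables with values in $\{1,\dots,k\}$, $\Pr[R^1=i]=p_i$, $\Pr[R^2=i]=q_i$, where $p_i,q_i\ge0$ and $\sum_i p_i=\sum_i q_i=1$. The 1-2 system is the system consisting of the splits $\mathbf 1[R^c\in W]$ ($c=1,2$) for all $W\subseteq\{1,\dots,k\}$ with $|W|\in\{1,2\}$. A maximally-connected coupling of the 1-2 system is a $k\times k$ matrix $r=(r_{ij})$ of nonnegative reals such that: $\sum_j r_{ij}=p_i$ and $\sum_i r_{ij}=q_j$ for all $i,j$; $r_{ii}=\min(p_i,q_i)$ for all $i$; and $r_{ii}+r_{ij}+r_{ji}+r_{jj}=\min(p_i+p_j,q_i+q_j)$ for all $i<j$. (Here $r_{ij}$ is the probability that $R^1$'s bunch is in the state of value $i$ and $R^2$'s in the state of value $j$; the conditions say each 1-split and 2-split pair is maximally coupled.) *)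

theory Defs
  imports Main "HOL.Real"
begin

definition is_dist :: "nat \<Rightarrow> (nat \<Rightarrow> real) \<Rightarrow> bool" where
  "is_dist k p \<longleftrightarrow> (\<forall>i\<in>{1..k}. p i \<ge> 0) \<and> (\<Sum>i=1..k. p i) = 1"

definition max_conn_coupling_12 ::
  "nat \<Rightarrow> (nat \<Rightarrow> real) \<Rightarrow> (nat \<Rightarrow> real) \<Rightarrow> (nat \<Rightarrow> nat \<Rightarrow> real) \<Rightarrow> bool" where
  "max_conn_coupling_12 k p q r \<longleftrightarrow>
     (\<forall>i\<in>{1..k}. \<forall>j\<in>{1..k}. r i j \<ge> 0) \<and>
     (\<forall>i\<in>{1..k}. (\<Sum>j=1..k. r i j) = p i) \<and>
     (\<forall>j\<in>{1..k}. (\<Sum>i=1..k. r i j) = q j) \<and>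
     (\<forall>i\<in>{1..k}. r i i = min (p i) (q i)) \<and>
     (\<forall>i\<in>{1..k}. \<forall>j\<in>{1..k}. i < j \<longrightarrow>
        r i i + r i j + r j i + r j j = min (p i + p j) (q i + q j))"

end

theory Submission
  imports Defs
begin

text \<open>Off the diagonal, each maximal pair coupling forces
  \<open>r i j = min (p i - q i)\<^sup>+ (q j - p j)\<^sup>+\<close>, since the row of \<open>i\<close> and the column of \<open>j\<close>
  have only \<open>(p i - q i)\<^sup>+\<close> and \<open>(q j - p j)\<^sup>+\<close> left outside the diagonal.  Hence the coupling
  is unique, and its off-diagonal support is \<open>P \<times> N\<close> with \<open>P\<close> the values where \<open>p > q\<close> and
  \<open>N\<close> those where \<open>p < q\<close>.  Two elements of \<open>P\<close> together with two elements of \<open>N\<close> would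
  overload either a row or a column, so \<open>P\<close> or \<open>N\<close> is a singleton (or the support is empty).\<close>

lemma max_conn_coupling_12_row_sum_le:
  assumes m: "max_conn_coupling_12 k p q r" and i: "i \<in> {1..k}" and S: "S \<subseteq> {1..k} - {i}"
  shows "sum (r i) S \<le> max (p i - q i) 0"
proof -
  have nonneg: "\<forall>j\<in>{1..k}. r i j \<ge> 0" and row: "(\<Sum>j=1..k. r i j) = p i"
    and diag: "r i i = min (p i) (q i)"
    using m i unfolding max_conn_coupling_12_def by auto
  have "(\<Sum>j=1..k. r i j) = r i i + sum (r i) ({1..k} - {i})"
    using i by (simp add: sum.remove)
  moreover have "sum (r i) S \<le> sum (r i) ({1..k} - {i})"
    by (rule sum_mono2) (use S nonneg in auto)
  ultimately show ?thesis using row diag by linarith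
qed

lemma max_conn_coupling_12_col_sum_le:
  assumes m: "max_conn_coupling_12 k p q r" and j: "j \<in> {1..k}" and S: "S \<subseteq> {1..k} - {j}"
  shows "(\<Sum>i\<in>S. r i j) \<le> max (q j - p j) 0"
proof -
  have nonneg: "\<forall>i\<in>{1..k}. r i j \<ge> 0" and col: "(\<Sum>i=1..k. r i j) = q j"
    and diag: "r j j = min (p j) (q j)"
    using m j unfolding max_conn_coupling_12_def by auto
  have "(\<Sum>i=1..k. r i j) = r j j + (\<Sum>i\<in>{1..k} - {j}. r i j)"
    using j by (simp add: sum.remove)
  moreover have "(\<Sum>i\<in>S. r i j) \<le> (\<Sum>i\<in>{1..k} - {j}. r i j)"
    by (rule sum_mono2) (use S nonneg in auto)
  ultimately show ?thesis using col diag by linarith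
qed

lemma max_conn_coupling_12_offdiag:
  assumes m: "max_conn_coupling_12 k p q r"
    and i: "i \<in> {1..k}" and j: "j \<in> {1..k}" and "i \<noteq> j"
  shows "r i j = min (max (p i - q i) 0) (max (q j - p j) 0)"
proof -
  have nonneg: "\<And>a b. a \<in> {1..k} \<Longrightarrow> b \<in> {1..k} \<Longrightarrow> r a b \<ge> 0"
    and diag: "\<And>a. a \<in> {1..k} \<Longrightarrow> r a a = min (p a) (q a)"
    and pair: "\<And>a b. a \<in> {1..k} \<Longrightarrow> b \<in> {1..k} \<Longrightarrow> a < b \<Longrightarrow>
        r a a + r a b + r b a + r b b = min (p a + p b) (q a + q b)"
    using m unfolding max_conn_coupling_12_def by auto
  have row_i: "r i j \<le> max (p i - q i) 0"
    using max_conn_coupling_12_row_sum_le[OF m i, of "{j}"] \<open>i \<noteq> j\<close> j by auto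
  have col_j: "r i j \<le> max (q j - p j) 0"
    using max_conn_coupling_12_col_sum_le[OF m j, of "{i}"] \<open>i \<noteq> j\<close> i by auto
  have row_j: "r j i \<le> max (p j - q j) 0"
    using max_conn_coupling_12_row_sum_le[OF m j, of "{i}"] \<open>i \<noteq> j\<close> i by auto
  have "r i i + r i j + r j i + r j j = min (p i + p j) (q i + q j)"
  proof (cases "i < j")
    case True
    then show ?thesis using pair[OF i j] by simp
  next
    case False
    then have "j < i" using \<open>i \<noteq> j\<close> by simp
    then show ?thesis using pair[OF j i] by (simp add: add.commute add.left_commute)
  qed
  then show ?thesis
    using row_i col_j row_j nonneg[OF i j] nonneg[OF j i] diag[OF i] diag[OF j]
    by (cases "p i \<le> q i"; cases "p j \<le> q j"; cases "p i + p j \<le> q i + q j")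
      (simp_all add: min_def max_def)
qed

lemma max_conn_coupling_12_unique:
  assumes "max_conn_coupling_12 k p q r" and "max_conn_coupling_12 k p q r'"
    and "i \<in> {1..k}" and "j \<in> {1..k}"
  shows "r i j = r' i j"
proof (cases "i = j")
  case True
  then show ?thesis using assms unfolding max_conn_coupling_12_def by auto
next
  case False
  then show ?thesis
    using max_conn_coupling_12_offdiag[OF assms(1,3,4)] max_conn_coupling_12_offdiag[OF assms(2,3,4)]
    by simp
qed

lemma max_conn_coupling_12_offdiag_nonzero_iff:
  assumes "max_conn_coupling_12 k p q r" and "i \<in> {1..k}" and "j \<in> {1..k}" and "i \<noteq> j"
  shows "r i j \<noteq> 0 \<longleftrightarrow> q i < p i \<and> p j < q j"
  using max_conn_coupling_12_offdiag[OF assms] by (auto simp: min_def max_def)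

lemma max_conn_coupling_12_surplus_or_deficit_unique:
  assumes m: "max_conn_coupling_12 k p q r"
    and a: "a \<in> {1..k}" and b: "b \<in> {1..k}" and "q a < p a" and "p b < q b"
  shows "(\<forall>a'\<in>{1..k}. q a' < p a' \<longrightarrow> a' = a) \<or> (\<forall>b'\<in>{1..k}. p b' < q b' \<longrightarrow> b' = b)"
proof (rule ccontr)
  assume "\<not> ?thesis"
  then obtain a' b' where a': "a' \<in> {1..k}" "q a' < p a'" "a' \<noteq> a"
    and b': "b' \<in> {1..k}" "p b' < q b'" "b' \<noteq> b"
    by blast
  have "a \<noteq> b" "a \<noteq> b'" "a' \<noteq> b"
    using \<open>q a < p a\<close> \<open>p b < q b\<close> a' b' by auto
  have ab: "r a b = min (p a - q a) (q b - p b)"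
    using max_conn_coupling_12_offdiag[OF m a b \<open>a \<noteq> b\<close>] \<open>q a < p a\<close> \<open>p b < q b\<close> by simp
  have ab': "r a b' = min (p a - q a) (q b' - p b')"
    using max_conn_coupling_12_offdiag[OF m a b'(1) \<open>a \<noteq> b'\<close>] \<open>q a < p a\<close> b' by simp
  have a'b: "r a' b = min (p a' - q a') (q b - p b)"
    using max_conn_coupling_12_offdiag[OF m a'(1) b \<open>a' \<noteq> b\<close>] a' \<open>p b < q b\<close> by simp
  have "r a b + r a b' \<le> p a - q a"
    using max_conn_coupling_12_row_sum_le[OF m a, of "{b, b'}"] b b' \<open>a \<noteq> b\<close> \<open>a \<noteq> b'\<close>
      \<open>q a < p a\<close> by auto
  moreover have "r a b + r a' b \<le> q b - p b"
    using max_conn_coupling_12_col_sum_le[OF m b, of "{a, a'}"] a a' \<open>a \<noteq> b\<close> \<open>a' \<noteq> b\<close>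
      \<open>p b < q b\<close> by auto
  ultimately show False
    using ab ab' a'b \<open>q a < p a\<close> \<open>p b < q b\<close> a' b'
    by (cases "p a - q a \<le> q b - p b") (simp_all add: min_def split: if_splits)
qed

theorem theorem5:
  fixes k :: nat and p q :: "nat \<Rightarrow> real"
  assumes "k \<ge> 2" and "is_dist k p" and "is_dist k q"
  shows "(\<forall>r r'. max_conn_coupling_12 k p q r \<and> max_conn_coupling_12 k p q r' \<longrightarrow>
            (\<forall>i\<in>{1..k}. \<forall>j\<in>{1..k}. r i j = r' i j))
       \<and> (\<forall>r. max_conn_coupling_12 k p q r \<longrightarrow>
            (\<exists>i0\<in>{1..k}. \<forall>i\<in>{1..k}. \<forall>j\<in>{1..k}. r i j \<noteq> 0 \<longrightarrow> i = j \<or> i = i0)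
          \<or> (\<exists>j0\<in>{1..k}. \<forall>i\<in>{1..k}. \<forall>j\<in>{1..k}. r i j \<noteq> 0 \<longrightarrow> i = j \<or> j = j0))"
proof (intro conjI allI impI)
  show "\<forall>i\<in>{1..k}. \<forall>j\<in>{1..k}. r i j = r' i j"
    if "max_conn_coupling_12 k p q r \<and> max_conn_coupling_12 k p q r'" for r r'
    using that max_conn_coupling_12_unique by blast
next
  fix r assume m: "max_conn_coupling_12 k p q r"
  have surplus: "q i < p i" and deficit: "p j < q j"
    if "i \<in> {1..k}" "j \<in> {1..k}" "r i j \<noteq> 0" "i \<noteq> j" for i j
    using max_conn_coupling_12_offdiag_nonzero_iff[OF m that(1,2,4)] that(3) by auto
  consider (row) a where "a \<in> {1..k}" "\<forall>a'\<in>{1..k}. q a' < p a' \<longrightarrow> a' = a"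
    | (col) b where "b \<in> {1..k}" "\<forall>b'\<in>{1..k}. p b' < q b' \<longrightarrow> b' = b"
    | (empty) "\<forall>a\<in>{1..k}. \<forall>b\<in>{1..k}. \<not> (q a < p a \<and> p b < q b)"
    using max_conn_coupling_12_surplus_or_deficit_unique[OF m] by blast
  then show "(\<exists>i0\<in>{1..k}. \<forall>i\<in>{1..k}. \<forall>j\<in>{1..k}. r i j \<noteq> 0 \<longrightarrow> i = j \<or> i = i0)
      \<or> (\<exists>j0\<in>{1..k}. \<forall>i\<in>{1..k}. \<forall>j\<in>{1..k}. r i j \<noteq> 0 \<longrightarrow> i = j \<or> j = j0)"
  proof cases
    case row
    then show ?thesis using surplus by blast
  next
    case col
    then show ?thesis using deficit by blast
  next
    case empty
    moreover have "1 \<in> {1..k}" using \<open>k \<ge> 2\<close> by simp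
    ultimately show ?thesis using surplus deficit by blast
  qed
qed

end
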